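(* Let $n\ge 1$, let $\boldsymbol{u}^\star\in\mathbb{R}^n\setminus\{\boldsymbol{0}\}$, and define $f:\mathbb{R}^n\to\mathbb{R}$ by $f(\boldsymbol{u})=\frac12\|\boldsymbol{u}\boldsymbol{u}^{\mathrm T}-\boldsymbol{u}^\star{\boldsymbol{u}^\star}^{\mathrm T}\|_1$. Then the set of stationary points of $f$ is $$\{\boldsymbol{u}\in\mathbb{R}^n:\boldsymbol{0}\in\partial f(\boldsymbol{u})\}=\Big\{\boldsymbol{u}\in\mathbb{R}^n:\ |u_i|\le|u_i^\star|\ \text{for all } i\in[n],\ \ \sum_{i:\,u_i^\star\neq 0}\operatorname{sgn}(u_i^\star)\,u_i=0\Big\}\cup\{\boldsymbol{u}^\star,-\boldsymbol{u}^\star\}.$$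
   Context: For a matrix $\boldsymbol{X}$, $\|\boldsymbol{X}\|_1=\sum_{i,j}|x_{ij}|$ (entrywise $\ell_1$-norm). $[n]=\{1,\dots,n\}$. $\partial f$ denotes the subdifferential of $f$; since $f$ is locally Lipschitz and subdifferentially regular, the Fréchet, limiting and Clarke subdifferentials of $f$ coincide, and any of them may be used. Explicitly, $\partial f(\boldsymbol{u})=\{\boldsymbol{Z}\boldsymbol{u}:\boldsymbol{Z}\text{ symmetric},\ \boldsymbol{Z}\in\operatorname{Sign}(\boldsymbol{u}\boldsymbol{u}^{\mathrm T}-\boldsymbol{u}^\star{\boldsymbol{u}^\star}^{\mathrm T})\}$, where $\operatorname{Sign}(x)=\{x/|x|\}$ for $x\ne0$, $\operatorname{Sign}(0)=[-1,1]$, applied entrywise. A point $\boldsymbol{u}$ is stationary if $\boldsymbol{0}\in\partial f(\boldsymbol{u})$. (The condition $|u_i|\le|u_i^\star|$ forces $u_i=0$ whenever $u_i^\star=0$.) *)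

theory Defs
  imports "HOL-Analysis.Analysis"
begin

definition Sign :: "real \<Rightarrow> real set" where
  "Sign x = (if x \<noteq> 0 then {x / \<bar>x\<bar>} else {-1..1})"

definition f_obj :: "real^'n \<Rightarrow> real^'n \<Rightarrow> real" where
  "f_obj ustar u = (1/2) * (\<Sum>i\<in>UNIV. \<Sum>j\<in>UNIV. \<bar>u$i * u$j - ustar$i * ustar$j\<bar>)"

text \<open>Subdifferential of f at u, in the explicit form given in the paper:
  { Z u : Z symmetric, Z_ij \<in> Sign((u u^T - u* u*^T)_ij) for all i,j }.\<close>
definition subdiff_f :: "real^'n \<Rightarrow> real^'n \<Rightarrow> (real^'n) set" where
  "subdiff_f ustar u = {Z *v u | Z :: real^'n^'n. transpose Z = Z \<and>
      (\<forall>i j. Z$i$j \<in> Sign (u$i * u$j - ustar$i * ustar$j))}"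

definition stationary_f :: "real^'n \<Rightarrow> real^'n \<Rightarrow> bool" where
  "stationary_f ustar u \<longleftrightarrow> 0 \<in> subdiff_f ustar u"

end

theory Submission
  imports Defs
begin

(*
  Write v for u*. A stationary point u comes with a symmetric matrix Z with Z u = 0 and
  Z_ij in Sign(u_i u_j - v_i v_j); wherever |u_i u_j| <> |v_i v_j| the entry Z_ij is a
  forced sign. Split the indices into A = {|u_i| > |v_i|}, B = {|u_i| = |v_i|} and
  C = {|u_i| < |v_i|}. Evaluating the bilinear form of Z on A x C once through the rows in A
  and once through the rows in C gives two identities that cannot hold together unless A is
  empty. If C is nonempty, any row in C reads -sgn(v_j) * sum_l sgn(v_l) u_l = 0, the linear
  condition. If C is empty, then u_i = +-v_i for all i; a row with u_i = v_i <> 0 forces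
  sum_l sgn(v_l) u_l >= 0 and a row with u_i = -v_i <> 0 forces the reverse inequality, so
  the sum vanishes unless u = +-v.
  Conversely Z_ij = -sgn(v_i) sgn(v_j) certifies every point of the first set, and Z = 0
  certifies +-v.
*)

lemma abs_diff_of_mult_nonpos:
  fixes x y :: "'a :: linordered_idom"
  assumes "x * y \<le> 0"
  shows "\<bar>x - y\<bar> = \<bar>x\<bar> + \<bar>y\<bar>"
  using assms mult_le_0_iff by force

lemma mult_ne_neg_of_abs_bounds:
  fixes c w p q :: "'a :: linordered_idom"
  assumes "0 < p" and "0 \<le> q" and "\<bar>w\<bar> \<le> p" and "\<bar>w - c\<bar> \<le> q"
  shows "c * w \<noteq> - ((p + q) * p)"
proof
  assume cw: "c * w = - ((p + q) * p)"
  with assms(1,2) have "c * w < 0"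
    by (simp add: add_pos_nonneg)
  have "(p + q) * p = \<bar>c\<bar> * \<bar>w\<bar>"
    using cw assms(1,2) by (simp add: abs_mult[symmetric])
  also have "\<dots> \<le> \<bar>c\<bar> * p"
    using assms(3) by (simp add: mult_left_mono)
  finally have "p + q \<le> \<bar>c\<bar>"
    using assms(1) by simp
  moreover have "\<bar>w - c\<bar> = \<bar>w\<bar> + \<bar>c\<bar>"
    using \<open>c * w < 0\<close> by (intro abs_diff_of_mult_nonpos) (simp add: mult.commute)
  ultimately show False
    using assms by linarith
qed

lemma sgn_mult_self: "sgn x * x = \<bar>x :: 'a :: linordered_idom\<bar>"
  by (simp add: abs_sgn mult.commute)

lemma abs_mult_less_abs_mult:
  fixes a b c d :: "'a :: linordered_idom"
  assumes "\<bar>a\<bar> < \<bar>b\<bar>" and "\<bar>c\<bar> \<le> \<bar>d\<bar>" and "d \<noteq> 0"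
  shows "\<bar>a * c\<bar> < \<bar>b * d\<bar>"
proof -
  have "\<bar>a\<bar> * \<bar>c\<bar> \<le> \<bar>a\<bar> * \<bar>d\<bar>"
    using assms(2) by (simp add: mult_left_mono)
  also have "\<dots> < \<bar>b\<bar> * \<bar>d\<bar>"
    using assms(1,3) by simp
  finally show ?thesis
    by (simp add: abs_mult)
qed

lemma Sign_abs_le_1: "z \<in> Sign x \<Longrightarrow> \<bar>z\<bar> \<le> 1"
  by (auto simp: Sign_def split: if_splits)

lemma Sign_eq_sgn: "z \<in> Sign x \<Longrightarrow> x \<noteq> 0 \<Longrightarrow> z = sgn x"
  by (auto simp: Sign_def real_sgn_eq split: if_splits)

lemma Sign_diff_eq_sgn_left:
  fixes a b z :: real
  assumes "z \<in> Sign (a - b)" and "\<bar>b\<bar> < \<bar>a\<bar>"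
  shows "z = sgn a"
  using Sign_eq_sgn[OF assms(1)] assms(2) by (auto simp: sgn_if abs_if split: if_splits)

lemma Sign_diff_eq_neg_sgn_right:
  fixes a b z :: real
  assumes "z \<in> Sign (a - b)" and "\<bar>a\<bar> \<le> \<bar>b\<bar>" and "a \<noteq> b"
  shows "z = - sgn b"
  using Sign_eq_sgn[OF assms(1)] assms(2,3) by (auto simp: sgn_if abs_if split: if_splits)

lemma neg_sgn_in_Sign_diff:
  fixes a b :: real
  assumes "\<bar>a\<bar> \<le> \<bar>b\<bar>"
  shows "- sgn b \<in> Sign (a - b)"
proof (cases "a = b")
  case False
  then have "sgn (a - b) = - sgn b"
    using assms by (auto simp: sgn_if abs_if split: if_splits)
  with False show ?thesis
    by (simp add: Sign_def real_sgn_eq)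
qed (simp add: Sign_def sgn_if)

lemma sum_sgn_mult_support:
  fixes u v :: "real^'n"
  shows "(\<Sum>i\<in>{i. v$i \<noteq> 0}. sgn (v$i) * u$i) = (\<Sum>i\<in>UNIV. sgn (v$i) * u$i)"
  by (intro sum.mono_neutral_left) auto

lemma symmetric_matrix_sum_swap:
  fixes Z :: "real^'n^'n" and x :: "real^'n"
  assumes "transpose Z = Z"
  shows "(\<Sum>i\<in>S. x$i * (\<Sum>j\<in>T. Z$i$j * x$j)) = (\<Sum>j\<in>T. x$j * (\<Sum>i\<in>S. Z$j$i * x$i))"
proof -
  have "Z$j$i = Z$i$j" for i j
    using arg_cong[where f = "\<lambda>M. M$i$j", OF assms] by (simp add: transpose_def)
  then show ?thesis
    by (simp add: sum_distrib_left mult_ac sum.swap[of _ S])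
qed

locale stationary_witness =
  fixes u v :: "real^'n" and Z :: "real^'n^'n"
  assumes symmetric: "transpose Z = Z"
    and entry_in_Sign: "Z$i$j \<in> Sign (u$i * u$j - v$i * v$j)"
    and kernel: "Z *v u = 0"
begin

lemma entry_abs_le_1: "\<bar>Z$i$j\<bar> \<le> 1"
  using Sign_abs_le_1[OF entry_in_Sign] .

lemma row_sum: "(\<Sum>j\<in>UNIV. Z$i$j * u$j) = 0"
  using arg_cong[where f = "\<lambda>x. x$i", OF kernel] by (simp add: matrix_vector_mult_def)

lemma row_sum_Compl: "(\<Sum>j\<in>S. Z$i$j * u$j) = - (\<Sum>j\<in>-S. Z$i$j * u$j)"
  using row_sum[of i] sum.union_disjoint[of S "-S" "\<lambda>j. Z$i$j * u$j"] by simp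

lemma entry_mult_of_abs_gt:
  assumes "\<bar>v$i\<bar> < \<bar>u$i\<bar>" and "\<bar>v$l\<bar> \<le> \<bar>u$l\<bar>"
  shows "Z$i$l * u$l = sgn (u$i) * \<bar>u$l\<bar>"
proof (cases "u$l = 0")
  case False
  with assms have "\<bar>v$i * v$l\<bar> < \<bar>u$i * u$l\<bar>"
    by (rule abs_mult_less_abs_mult)
  then have "Z$i$l = sgn (u$i) * sgn (u$l)"
    using Sign_diff_eq_sgn_left[OF entry_in_Sign] by (simp add: sgn_mult)
  then show ?thesis
    by (simp add: abs_sgn mult_ac)
qed simp

lemma entry_mult_of_abs_lt:
  assumes "\<bar>u$j\<bar> < \<bar>v$j\<bar>" and "\<bar>u$l\<bar> \<le> \<bar>v$l\<bar>"
  shows "Z$j$l * u$l = - sgn (v$j) * (sgn (v$l) * u$l)"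
proof (cases "u$l = 0")
  case False
  with assms have "\<bar>u$j * u$l\<bar> < \<bar>v$j * v$l\<bar>"
    by (intro abs_mult_less_abs_mult) auto
  then have "Z$j$l = - sgn (v$j) * sgn (v$l)"
    using Sign_diff_eq_neg_sgn_right[OF entry_in_Sign] by (simp add: sgn_mult)
  then show ?thesis
    by simp
qed simp

lemma row_sum_of_abs_gt:
  assumes "\<bar>v$i\<bar> < \<bar>u$i\<bar>"
  shows "(\<Sum>j | \<bar>u$j\<bar> < \<bar>v$j\<bar>. Z$i$j * u$j)
    = - sgn (u$i) * (\<Sum>j | \<bar>v$j\<bar> \<le> \<bar>u$j\<bar>. \<bar>u$j\<bar>)"
proof -
  have "- {j. \<bar>u$j\<bar> < \<bar>v$j\<bar>} = {j. \<bar>v$j\<bar> \<le> \<bar>u$j\<bar>}"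
    by auto
  then have "(\<Sum>j | \<bar>u$j\<bar> < \<bar>v$j\<bar>. Z$i$j * u$j) = - (\<Sum>j | \<bar>v$j\<bar> \<le> \<bar>u$j\<bar>. Z$i$j * u$j)"
    using row_sum_Compl by metis
  also have "\<dots> = - (\<Sum>j | \<bar>v$j\<bar> \<le> \<bar>u$j\<bar>. sgn (u$i) * \<bar>u$j\<bar>)"
    using entry_mult_of_abs_gt[OF assms] by simp
  finally show ?thesis
    by (simp add: sum_distrib_left[symmetric])
qed

lemma row_sum_of_abs_lt:
  assumes "\<bar>u$j\<bar> < \<bar>v$j\<bar>"
  shows "(\<Sum>l | \<bar>v$l\<bar> < \<bar>u$l\<bar>. Z$j$l * u$l)
    = sgn (v$j) * (\<Sum>l | \<bar>u$l\<bar> \<le> \<bar>v$l\<bar>. sgn (v$l) * u$l)"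
proof -
  have "- {l. \<bar>v$l\<bar> < \<bar>u$l\<bar>} = {l. \<bar>u$l\<bar> \<le> \<bar>v$l\<bar>}"
    by auto
  then have "(\<Sum>l | \<bar>v$l\<bar> < \<bar>u$l\<bar>. Z$j$l * u$l) = - (\<Sum>l | \<bar>u$l\<bar> \<le> \<bar>v$l\<bar>. Z$j$l * u$l)"
    using row_sum_Compl by metis
  also have "\<dots> = - (\<Sum>l | \<bar>u$l\<bar> \<le> \<bar>v$l\<bar>. - sgn (v$j) * (sgn (v$l) * u$l))"
    using entry_mult_of_abs_lt[OF assms] by simp
  finally show ?thesis
    by (simp add: sum_distrib_left[symmetric] sum_negf)
qed

(* The bilinear form of Z on A x C, for A = {|v_l| < |u_l|} and C = {|u_l| < |v_l|},
   computed through the rows in A (right) and through the rows in C (left). *)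
lemma cross_sum_eq:
  "(\<Sum>l | \<bar>u$l\<bar> < \<bar>v$l\<bar>. sgn (v$l) * u$l) * (\<Sum>l | \<bar>u$l\<bar> \<le> \<bar>v$l\<bar>. sgn (v$l) * u$l)
    = - ((\<Sum>l | \<bar>v$l\<bar> \<le> \<bar>u$l\<bar>. \<bar>u$l\<bar>) * (\<Sum>l | \<bar>v$l\<bar> < \<bar>u$l\<bar>. \<bar>u$l\<bar>))"
  (is "?c * ?w = - (?P * ?p)")
proof -
  let ?A = "{l. \<bar>v$l\<bar> < \<bar>u$l\<bar>}" and ?C = "{l. \<bar>u$l\<bar> < \<bar>v$l\<bar>}"
  have "(\<Sum>i\<in>?A. u$i * (\<Sum>j\<in>?C. Z$i$j * u$j)) = (\<Sum>i\<in>?A. - (?P * (sgn (u$i) * u$i)))"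
    by (intro sum.cong refl) (subst row_sum_of_abs_gt; simp add: mult_ac)
  also have "\<dots> = - (?P * ?p)"
    by (simp add: sgn_mult_self sum_distrib_left sum_negf)
  finally have "(\<Sum>i\<in>?A. u$i * (\<Sum>j\<in>?C. Z$i$j * u$j)) = - (?P * ?p)" .
  moreover have "(\<Sum>j\<in>?C. u$j * (\<Sum>i\<in>?A. Z$j$i * u$i)) = (\<Sum>j\<in>?C. (sgn (v$j) * u$j) * ?w)"
    by (intro sum.cong refl) (subst row_sum_of_abs_lt; simp add: mult_ac)
  then have "(\<Sum>j\<in>?C. u$j * (\<Sum>i\<in>?A. Z$j$i * u$i)) = ?c * ?w"
    by (simp only: sum_distrib_right)
  ultimately show ?thesis
    using symmetric_matrix_sum_swap[OF symmetric] by metis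
qed

lemma abs_sum_sgn_le_of_abs_lt:
  assumes "\<bar>u$j\<bar> < \<bar>v$j\<bar>"
  shows "\<bar>\<Sum>l | \<bar>u$l\<bar> \<le> \<bar>v$l\<bar>. sgn (v$l) * u$l\<bar> \<le> (\<Sum>l | \<bar>v$l\<bar> < \<bar>u$l\<bar>. \<bar>u$l\<bar>)"
proof -
  have "v$j \<noteq> 0"
    using assms by auto
  then have "\<bar>\<Sum>l | \<bar>u$l\<bar> \<le> \<bar>v$l\<bar>. sgn (v$l) * u$l\<bar> = \<bar>\<Sum>l | \<bar>v$l\<bar> < \<bar>u$l\<bar>. Z$j$l * u$l\<bar>"
    by (simp add: row_sum_of_abs_lt[OF assms] abs_mult)
  also have "\<dots> \<le> (\<Sum>l | \<bar>v$l\<bar> < \<bar>u$l\<bar>. \<bar>Z$j$l * u$l\<bar>)"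
    by (rule sum_abs)
  also have "\<dots> \<le> (\<Sum>l | \<bar>v$l\<bar> < \<bar>u$l\<bar>. \<bar>u$l\<bar>)"
    by (intro sum_mono) (simp add: abs_mult mult_left_le_one_le entry_abs_le_1)
  finally show ?thesis .
qed

lemma abs_le: "\<bar>u$k\<bar> \<le> \<bar>v$k\<bar>"
proof (rule ccontr)
  assume "\<not> \<bar>u$k\<bar> \<le> \<bar>v$k\<bar>"
  define A where "A = {l. \<bar>v$l\<bar> < \<bar>u$l\<bar>}"
  define B where "B = {l. \<bar>u$l\<bar> = \<bar>v$l\<bar>}"
  define C where "C = {l. \<bar>u$l\<bar> < \<bar>v$l\<bar>}"
  define p where "p = (\<Sum>l\<in>A. \<bar>u$l\<bar>)"
  define q where "q = (\<Sum>l\<in>B. \<bar>u$l\<bar>)"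
  define c where "c = (\<Sum>l\<in>C. sgn (v$l) * u$l)"
  define w where "w = (\<Sum>l\<in>B \<union> C. sgn (v$l) * u$l)"
  have AB: "{l. \<bar>v$l\<bar> \<le> \<bar>u$l\<bar>} = A \<union> B" "A \<inter> B = {}"
    and BC: "{l. \<bar>u$l\<bar> \<le> \<bar>v$l\<bar>} = B \<union> C" "B \<inter> C = {}"
    by (auto simp: A_def B_def C_def)
  have "k \<in> A"
    using \<open>\<not> \<bar>u$k\<bar> \<le> \<bar>v$k\<bar>\<close> by (simp add: A_def)
  then have "\<bar>u$k\<bar> \<le> p" "0 < \<bar>u$k\<bar>"
    by (auto simp: p_def A_def intro: member_le_sum)
  then have "0 < p"
    by linarith
  have "(\<Sum>l\<in>A \<union> B. \<bar>u$l\<bar>) = p + q"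
    by (simp add: p_def q_def sum.union_disjoint AB(2))
  then have "c * w = - ((p + q) * p)"
    using cross_sum_eq[folded A_def C_def, unfolded AB(1) BC(1)] by (simp only: c_def w_def p_def)
  have "0 \<le> q"
    by (simp add: q_def sum_nonneg)
  with \<open>0 < p\<close> have "c \<noteq> 0"
    using \<open>c * w = - ((p + q) * p)\<close> by (auto simp: add_pos_nonneg)
  then obtain j where "j \<in> C"
    unfolding c_def by fastforce
  then have "\<bar>w\<bar> \<le> p"
    using abs_sum_sgn_le_of_abs_lt unfolding BC by (simp add: C_def w_def p_def A_def)
  have "w - c = (\<Sum>l\<in>B. sgn (v$l) * u$l)"
    by (simp add: w_def c_def sum.union_disjoint BC(2))
  also have "\<bar>\<dots>\<bar> \<le> (\<Sum>l\<in>B. \<bar>sgn (v$l) * u$l\<bar>)"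
    by (rule sum_abs)
  also have "\<dots> \<le> q"
    unfolding q_def by (intro sum_mono) (simp add: abs_mult abs_sgn_eq)
  finally have "\<bar>w - c\<bar> \<le> q" .
  with \<open>0 < p\<close> \<open>0 \<le> q\<close> \<open>\<bar>w\<bar> \<le> p\<close> \<open>c * w = - ((p + q) * p)\<close> show False
    using mult_ne_neg_of_abs_bounds by blast
qed

lemma sum_sgn_eq_0_of_abs_lt:
  assumes "\<bar>u$j\<bar> < \<bar>v$j\<bar>"
  shows "(\<Sum>l\<in>UNIV. sgn (v$l) * u$l) = 0"
proof -
  have "0 = (\<Sum>l\<in>UNIV. Z$j$l * u$l)"
    using row_sum by simp
  also have "\<dots> = - sgn (v$j) * (\<Sum>l\<in>UNIV. sgn (v$l) * u$l)"
    by (simp add: entry_mult_of_abs_lt[OF assms abs_le] sum_distrib_left)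
  finally show ?thesis
    using assms by (auto simp: sgn_0_0)
qed

lemma sum_sgn_nonneg_of_abs_eq:
  assumes abs_eq: "\<And>l. \<bar>u$l\<bar> = \<bar>v$l\<bar>" and "u$i = v$i" and "v$i \<noteq> 0"
  shows "0 \<le> (\<Sum>l\<in>UNIV. sgn (v$l) * u$l)"
proof -
  have "- (sgn (v$l) * u$l) \<le> sgn (v$i) * (Z$i$l * u$l)" for l
  proof (cases "u$l = v$l")
    case True
    have "- (sgn (v$l) * u$l) = - \<bar>u$l\<bar>"
      by (simp add: True sgn_mult_self)
    also have "\<dots> \<le> - \<bar>sgn (v$i) * (Z$i$l * u$l)\<bar>"
      using entry_abs_le_1[of i l] by (simp add: abs_mult abs_sgn_eq mult_left_le_one_le)
    also have "\<dots> \<le> sgn (v$i) * (Z$i$l * u$l)"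
      by linarith
    finally show ?thesis .
  next
    case False
    with abs_eq[of l] have "u$l = - v$l" "v$l \<noteq> 0"
      by (auto simp: abs_eq_iff)
    with assms(2,3) have "Z$i$l = - sgn (v$i) * sgn (v$l)"
      using Sign_diff_eq_neg_sgn_right[OF entry_in_Sign[of i l]] by (simp add: abs_mult sgn_mult)
    with \<open>u$l = - v$l\<close> \<open>v$i \<noteq> 0\<close> show ?thesis
      by (simp add: mult.assoc[symmetric] sgn_mult_self)
  qed
  then have "- (\<Sum>l\<in>UNIV. sgn (v$l) * u$l) \<le> sgn (v$i) * (\<Sum>l\<in>UNIV. Z$i$l * u$l)"
    by (simp add: sum_negf[symmetric] sum_distrib_left sum_mono)
  then show ?thesis
    by (simp add: row_sum)
qed

lemma uminus: "stationary_witness (- u) v Z"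
  using symmetric entry_in_Sign kernel
  by unfold_locales (simp_all add: matrix_vector_mult_diff_distrib[of Z 0 u, simplified])

lemma stationary_cases:
  "(\<forall>i. \<bar>u$i\<bar> \<le> \<bar>v$i\<bar>) \<and> (\<Sum>i\<in>UNIV. sgn (v$i) * u$i) = 0 \<or> u = v \<or> u = - v"
proof (cases "\<exists>j. \<bar>u$j\<bar> < \<bar>v$j\<bar>")
  case True
  then show ?thesis
    using abs_le sum_sgn_eq_0_of_abs_lt by blast
next
  case False
  then have abs_eq: "\<And>l. \<bar>u$l\<bar> = \<bar>v$l\<bar>"
    using abs_le by (meson antisym_conv2)
  show ?thesis
  proof (cases "u = v \<or> u = - v")
    case False
    then obtain i k where "u$i \<noteq> - v$i" "u$k \<noteq> v$k"
      by (auto simp: vec_eq_iff)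
    with abs_eq[of i] abs_eq[of k] have "u$i = v$i" "v$i \<noteq> 0" "(- u)$k = v$k" "v$k \<noteq> 0"
      by (auto simp: abs_eq_iff)
    interpret neg: stationary_witness "- u" v Z
      by (rule uminus)
    have "0 \<le> (\<Sum>l\<in>UNIV. sgn (v$l) * u$l)"
      using sum_sgn_nonneg_of_abs_eq abs_eq \<open>u$i = v$i\<close> \<open>v$i \<noteq> 0\<close> by blast
    moreover have "0 \<le> (\<Sum>l\<in>UNIV. sgn (v$l) * (- u)$l)"
      using neg.sum_sgn_nonneg_of_abs_eq abs_eq \<open>(- u)$k = v$k\<close> \<open>v$k \<noteq> 0\<close> by simp
    ultimately show ?thesis
      using abs_le by (simp add: sum_negf)
  qed auto
qed

end

lemma stationary_f_iff_witness: "stationary_f v u \<longleftrightarrow> (\<exists>Z. stationary_witness u v Z)"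
  by (auto simp: stationary_f_def subdiff_f_def stationary_witness_def)

lemma stationary_f_eq_or_eq_uminus:
  fixes u v :: "real^'n"
  assumes "u = v \<or> u = - v"
  shows "stationary_f v u"
proof -
  have "stationary_witness u v 0"
    using assms by unfold_locales (auto simp: Sign_def transpose_def vec_eq_iff)
  then show ?thesis
    by (auto simp: stationary_f_iff_witness)
qed

lemma stationary_f_of_abs_le:
  fixes u v :: "real^'n"
  assumes "\<And>i. \<bar>u$i\<bar> \<le> \<bar>v$i\<bar>" and "(\<Sum>i\<in>UNIV. sgn (v$i) * u$i) = 0"
  shows "stationary_f v u"
proof -
  define Z :: "real^'n^'n" where "Z = (\<chi> i j. - sgn (v$i) * sgn (v$j))"
  have "stationary_witness u v Z"
  proof
    show "transpose Z = Z"
      by (simp add: Z_def transpose_def vec_eq_iff mult.commute)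
    show "Z$i$j \<in> Sign (u$i * u$j - v$i * v$j)" for i j
      using neg_sgn_in_Sign_diff[of "u$i * u$j" "v$i * v$j"] assms(1)
      by (simp add: Z_def abs_mult mult_mono sgn_mult)
    have "(Z *v u)$i = - sgn (v$i) * (\<Sum>j\<in>UNIV. sgn (v$j) * u$j)" for i
      by (simp add: Z_def matrix_vector_mult_def sum_distrib_left mult_ac)
    then show "Z *v u = 0"
      using assms(2) by (simp add: vec_eq_iff)
  qed
  then show ?thesis
    by (auto simp: stationary_f_iff_witness)
qed

theorem theorem1:
  fixes ustar :: "real^'n"
  assumes "ustar \<noteq> 0"
  shows "{u. stationary_f ustar u} =
    {u. (\<forall>i. \<bar>u$i\<bar> \<le> \<bar>ustar$i\<bar>) \<and>
        (\<Sum>i\<in>{i. ustar$i \<noteq> 0}. sgn (ustar$i) * u$i) = 0} \<union> {ustar, -ustar}"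
proof (rule set_eqI)
  fix u :: "real^'n"
  have "stationary_f ustar u \<longleftrightarrow>
      (\<forall>i. \<bar>u$i\<bar> \<le> \<bar>ustar$i\<bar>) \<and> (\<Sum>i\<in>UNIV. sgn (ustar$i) * u$i) = 0 \<or> u = ustar \<or> u = - ustar"
    using stationary_witness.stationary_cases stationary_f_iff_witness stationary_f_of_abs_le stationary_f_eq_or_eq_uminus
    by metis
  then show "u \<in> {u. stationary_f ustar u} \<longleftrightarrow> u \<in> {u. (\<forall>i. \<bar>u$i\<bar> \<le> \<bar>ustar$i\<bar>) \<and>
        (\<Sum>i\<in>{i. ustar$i \<noteq> 0}. sgn (ustar$i) * u$i) = 0} \<union> {ustar, -ustar}"
    by (auto simp: sum_sgn_mult_support)
qed

end
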